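(* Let $A$ be a C$^*$-algebra with cancellation. (1) Let $p$ be a projection in $A$ and let $\{g_n\}_{n=1}^N$ be an increasing sequence in $K_0(A)^+$ with $g_N=[p]_0$. Then there exists an increasing sequence $\{p_n\}_{n=1}^N$ of projections in $A$ such that $[p_n]_0=g_n$ for $1\leq n\leq N$ and $p_N=p$. (2) Let $\{p_n\}_{n=1}^N$ be an increasing sequence of projections in $A$ and $\{g_m\}_{m=1}^M$ an increasing sequence in $K_0(A)^+$ such that there is an increasing sequence $\{m_n\}_{n=1}^N$ of indices with $g_{m_n}=[p_n]_0$ for all $1\leq n\leq N$ and $m_N=M$. Then there exists an increasing sequence $\{q_m\}_{m=1}^M$ of projections in $A$ such that $[q_m]_0=g_m$ for all $1\leq m\leq M$ and $p_n=q_{m_n}$ for all $1\leq n\leq N$.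
   Context: For a C$^*$-algebra $A$, $K_0(A)$ is the usual $K_0$-group with positive cone $K_0(A)^+=\{[p]_0 : p \text{ a projection in } M_n(A),\ n\geq1\}$, and $g\leq h$ means $h-g\in K_0(A)^+$. For projections, $p\leq q$ means $pq=qp=p$; increasing sequences are taken with respect to these orders. $A$ has cancellation if for all projections $p,q$ in $\bigcup_{n\geq1}M_n(A)$, $[p]_0=[q]_0$ if and only if $p$ and $q$ are Murray--von Neumann equivalent. *)

theory Defs
  imports Complex_Main
begin

class has_adj =
  fixes adj :: "'a \<Rightarrow> 'a"

text \<open>The complex scalar multiplication is
  an extra operation compatible with the real one.\<close>
class cstar_algebra = real_normed_algebra + banach + has_adj +
  fixes scaleC :: "complex \<Rightarrow> 'a \<Rightarrow> 'a"
  assumes scaleC_of_real: "scaleC (complex_of_real r) x = scaleR r x"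
    and scaleC_add_right: "scaleC c (x + y) = scaleC c x + scaleC c y"
    and scaleC_add_left: "scaleC (c + d) x = scaleC c x + scaleC d x"
    and scaleC_scaleC: "scaleC c (scaleC d x) = scaleC (c * d) x"
    and scaleC_one: "scaleC 1 x = x"
    and scaleC_mult_left: "scaleC c x * y = scaleC c (x * y)"
    and scaleC_mult_right: "x * scaleC c y = scaleC c (x * y)"
    and norm_scaleC: "norm (scaleC c x) = cmod c * norm x"
    and adj_add: "adj (x + y) = adj x + adj y"
    and adj_scaleC: "adj (scaleC c x) = scaleC (cnj c) (adj x)"
    and adj_mult: "adj (x * y) = adj y * adj x"
    and adj_adj: "adj (adj x) = x"
    and cstar_identity: "norm (adj x * x) = (norm x)^2"

section \<open>Forced unitization\<close>

datatype 'a unitz = Uz 'a complex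

instantiation unitz :: (cstar_algebra) comm_monoid_add
begin
definition zero_unitz :: "'a unitz" where "zero_unitz = Uz 0 0"
fun plus_unitz :: "'a unitz \<Rightarrow> 'a unitz \<Rightarrow> 'a unitz" where
  "plus_unitz (Uz a x) (Uz b y) = Uz (a + b) (x + y)"
instance
proof
  fix a b c :: "'a unitz"
  show "a + b + c = a + (b + c)"
    by (cases a; cases b; cases c) (simp add: algebra_simps)
  show "a + b = b + a"
    by (cases a; cases b) (simp add: algebra_simps)
  show "0 + a = a"
    by (cases a) (simp add: zero_unitz_def)
qed
end

instantiation unitz :: (cstar_algebra) times
begin
fun times_unitz :: "'a unitz \<Rightarrow> 'a unitz \<Rightarrow> 'a unitz" where
  "times_unitz (Uz a x) (Uz b y) = Uz (a * b + scaleC x b + scaleC y a) (x * y)"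
instance ..
end

instantiation unitz :: (cstar_algebra) has_adj
begin
fun adj_unitz :: "'a unitz \<Rightarrow> 'a unitz" where
  "adj_unitz (Uz a x) = Uz (adj a) (cnj x)"
instance ..
end

section \<open>Matrices over an algebra: M_infinity = union of the M_n, upper left corner embedding\<close>

type_synonym 'a mat = "nat \<Rightarrow> nat \<Rightarrow> 'a"

definition in_Mn :: "nat \<Rightarrow> 'a::zero mat \<Rightarrow> bool" where
  "in_Mn n M \<longleftrightarrow> (\<forall>i j. (n \<le> i \<or> n \<le> j) \<longrightarrow> M i j = 0)"

definition fin_mat :: "'a::zero mat \<Rightarrow> bool" where
  "fin_mat M \<longleftrightarrow> (\<exists>n. in_Mn n M)"

definition mmult :: "'a::{comm_monoid_add,times} mat \<Rightarrow> 'a mat \<Rightarrow> 'a mat" where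
  "mmult M N = (\<lambda>i j. \<Sum>k\<in>{k. M i k \<noteq> 0}. M i k * N k j)"

definition madj :: "'a::has_adj mat \<Rightarrow> 'a mat" where
  "madj M = (\<lambda>i j. adj (M j i))"

definition is_proj :: "'a::{comm_monoid_add,times,has_adj} mat \<Rightarrow> bool" where
  "is_proj P \<longleftrightarrow> fin_mat P \<and> madj P = P \<and> mmult P P = P"

definition mvn :: "'a::{comm_monoid_add,times,has_adj} mat \<Rightarrow> 'a mat \<Rightarrow> bool" where
  "mvn P Q \<longleftrightarrow> (\<exists>V. fin_mat V \<and> mmult (madj V) V = P \<and> mmult V (madj V) = Q)"

definition dsum :: "nat \<Rightarrow> 'a::zero mat \<Rightarrow> 'a mat \<Rightarrow> 'a mat" where
  "dsum n P Q = (\<lambda>i j. if i < n \<and> j < n then P i j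
                        else if n \<le> i \<and> n \<le> j then Q (i - n) (j - n) else 0)"

definition lift_uz :: "'a::cstar_algebra mat \<Rightarrow> 'a unitz mat" where
  "lift_uz M = (\<lambda>i j. Uz (M i j) 0)"

definition unit_uz :: "nat \<Rightarrow> 'a::cstar_algebra unitz mat" where
  "unit_uz k = (\<lambda>i j. if i = j \<and> i < k then Uz 0 1 else 0)"

text \<open>Equality of K_0-classes: [P]_0 = [Q]_0 in K_0(A) (a subgroup of K_0 of the
  unitization) iff P + 1_k and Q + 1_k are Murray--von Neumann equivalent over the
  unitization for some k.\<close>
definition k0_eq :: "'a::cstar_algebra mat \<Rightarrow> 'a mat \<Rightarrow> bool" where
  "k0_eq P Q \<longleftrightarrow> (\<exists>n k. in_Mn n P \<and> in_Mn n Q \<and>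
      mvn (dsum n (lift_uz P) (unit_uz k)) (dsum n (lift_uz Q) (unit_uz k)))"

text \<open>The class [P]_0, represented as a set of projections.\<close>
definition k0cls :: "'a::cstar_algebra mat \<Rightarrow> 'a mat set" where
  "k0cls P = {Q. is_proj Q \<and> k0_eq P Q}"

definition K0pos :: "'a::cstar_algebra mat set set" where
  "K0pos = k0cls ` {P. is_proj P}"

text \<open>Order on K_0(A)^+: g \<le> h iff h - g \<in> K_0(A)^+, i.e. h = g + [r]_0 for some
  projection r, where [p]_0 + [r]_0 = [diag(p,r)]_0.\<close>
definition k0_le :: "'a::cstar_algebra mat set \<Rightarrow> 'a mat set \<Rightarrow> bool" where
  "k0_le g h \<longleftrightarrow> (\<exists>P R n. is_proj P \<and> is_proj R \<and> in_Mn n P \<and>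
      g = k0cls P \<and> h = k0cls (dsum n P R))"

definition has_cancellation :: "'a::cstar_algebra itself \<Rightarrow> bool" where
  "has_cancellation _ \<longleftrightarrow>
     (\<forall>P Q :: 'a mat. is_proj P \<longrightarrow> is_proj Q \<longrightarrow> (k0_eq P Q \<longleftrightarrow> mvn P Q))"

definition elem_mat :: "'a::zero \<Rightarrow> 'a mat" where
  "elem_mat a = (\<lambda>i j. if i = 0 \<and> j = 0 then a else 0)"

definition is_aproj :: "'a::cstar_algebra \<Rightarrow> bool" where
  "is_aproj p \<longleftrightarrow> adj p = p \<and> p * p = p"

definition proj_le :: "'a::cstar_algebra \<Rightarrow> 'a \<Rightarrow> bool" where
  "proj_le p q \<longleftrightarrow> p * q = p \<and> q * p = p"

end

theory Submission
  imports Defs "HOL-Library.Function_Algebras"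
begin

text \<open>
  Part (1) is the case \<open>N = 1\<close> of part (2), and part (2) follows by gluing chains between
  consecutive \<open>p\<^sub>n\<close>, after padding all sequences with the zero projection at index \<open>0\<close>.
  Everything therefore rests on an interpolation step: if \<open>b \<le> a\<close> are projections of \<open>A\<close> and
  \<open>[b] \<le> g \<le> [a]\<close>, then \<open>g = [c]\<close> for a projection \<open>b \<le> c \<le> a\<close>. Write \<open>g = [b] + [r]\<close> and
  \<open>[a] = g + [r']\<close>. Since \<open>[a] = [b] + [a - b]\<close>, cancellation gives \<open>a - b \<sim> r \<oplus> r'\<close>; the
  partial isometry implementing this equivalence carries \<open>r \<oplus> 0\<close> onto a subprojection
  \<open>c\<^sub>0 \<le> a - b\<close> with \<open>c\<^sub>0 \<sim> r\<close>, and \<open>c = b + c\<^sub>0\<close> works.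
\<close>

class star_semiring = semiring_0 + has_adj +
  assumes star_adj_add: "adj (x + y) = adj x + adj y"
    and star_adj_mult: "adj (x * y) = adj y * adj x"
    and star_adj_adj: "adj (adj x) = x"
    and star_adj_zero: "adj 0 = 0"

lemma (in cstar_algebra) adj_zero: "adj 0 = 0"
  by (metis add_cancel_right_right adj_add add_0)

subclass (in cstar_algebra) star_semiring
  by unfold_locales (simp_all add: adj_add adj_mult adj_adj adj_zero)

lemma scaleC_zero_left [simp]: "scaleC 0 (x::'a::cstar_algebra) = 0"
  using scaleC_of_real[of 0 x] by simp

lemma scaleC_zero_right [simp]: "scaleC c (0::'a::cstar_algebra) = 0"
  by (metis add_cancel_right_right add_0 scaleC_add_right)

instance unitz :: (cstar_algebra) semiring_0
proof
  fix a b c :: "'a unitz"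
  show "a * b * c = a * (b * c)"
    by (cases a; cases b; cases c)
       (simp add: algebra_simps scaleC_add_right scaleC_mult_left scaleC_mult_right
          scaleC_scaleC mult.commute)
  show "(a + b) * c = a * c + b * c"
    by (cases a; cases b; cases c) (simp add: algebra_simps scaleC_add_right scaleC_add_left)
  show "a * (b + c) = a * b + a * c"
    by (cases a; cases b; cases c) (simp add: algebra_simps scaleC_add_right scaleC_add_left)
  show "0 * a = 0" "a * 0 = 0"
    by (cases a; simp add: zero_unitz_def)+
qed

instance unitz :: (cstar_algebra) star_semiring
proof
  fix x y :: "'a unitz"
  show "adj (x + y) = adj x + adj y"
    by (cases x; cases y) (simp add: adj_add)
  show "adj (x * y) = adj y * adj x"
    by (cases x; cases y) (simp add: adj_add adj_mult adj_scaleC algebra_simps)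
  show "adj (adj x) = x"
    by (cases x) (simp add: adj_adj)
  show "adj 0 = (0::'a unitz)"
    by (simp add: zero_unitz_def adj_zero)
qed

section \<open>Finite matrices\<close>

definition mmul :: "nat \<Rightarrow> 'a::semiring_0 mat \<Rightarrow> 'a mat \<Rightarrow> 'a mat" where
  "mmul n A B = (\<lambda>i j. \<Sum>k<n. A i k * B k j)"

definition single_entry :: "nat \<Rightarrow> nat \<Rightarrow> 'a::zero \<Rightarrow> 'a mat" where
  "single_entry i j a = (\<lambda>r s. if r = i \<and> s = j then a else 0)"

lemma sum_lessThan_add_split:
  "(\<Sum>k<n + m. f k) = (\<Sum>k<n. f k) + (\<Sum>l<m. f (n + l))" for f :: "nat \<Rightarrow> 'b::comm_monoid_add"
  by (induction m) (simp_all add: add.assoc)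

lemma mmul_add_left: "mmul n (A + B) C = mmul n A C + mmul n B C"
  by (simp add: mmul_def fun_eq_iff distrib_right sum.distrib)

lemma mmul_add_right: "mmul n A (B + C) = mmul n A B + mmul n A C"
  by (simp add: mmul_def fun_eq_iff distrib_left sum.distrib)

lemma mmul_zero_left [simp]: "mmul n 0 B = 0"
  and mmul_zero_right [simp]: "mmul n A 0 = 0"
  by (simp_all add: mmul_def fun_eq_iff)

lemma mmul_assoc: "mmul n (mmul n A B) C = mmul n A (mmul n B C)"
proof -
  have "(\<Sum>l<n. (\<Sum>k<n. A i k * B k l) * C l j) = (\<Sum>k<n. A i k * (\<Sum>l<n. B k l * C l j))"
    for i j
    by (simp add: sum_distrib_left sum_distrib_right mult.assoc) (rule sum.swap)
  then show ?thesis by (simp add: mmul_def fun_eq_iff)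
qed

lemma single_entry_zero [simp]: "single_entry i j 0 = 0"
  by (simp add: single_entry_def fun_eq_iff)

lemma single_entry_add:
  "single_entry i j a + single_entry i j b = single_entry i j (a + b :: 'a::comm_monoid_add)"
  by (simp add: single_entry_def fun_eq_iff)

lemma mmul_single_entry_left:
  "mmul n (single_entry i j a) B = (\<lambda>r s. if r = i \<and> j < n then a * B j s else 0)"
  by (auto simp: mmul_def single_entry_def fun_eq_iff if_distrib[where f="\<lambda>x. x * _"]
      sum.delta' cong: if_cong)

lemma mmul_single_entry_right:
  "mmul n A (single_entry i j a) = (\<lambda>r s. if s = j \<and> i < n then A r i * a else 0)"
  by (auto simp: mmul_def single_entry_def fun_eq_iff if_distrib[where f="\<lambda>x. _ * x"]
      sum.delta' cong: if_cong)

lemma mmul_single_entry_single_entry: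
  "mmul n (single_entry i j a) (single_entry k l b) =
     (if j = k \<and> j < n then single_entry i l (a * b) else 0)"
  unfolding mmul_single_entry_left by (auto simp: single_entry_def fun_eq_iff)

lemma mmul_single_entry_zero_row: "(\<And>s. B j s = 0) \<Longrightarrow> mmul n (single_entry i j a) B = 0"
  by (simp add: mmul_single_entry_left fun_eq_iff)

lemma mmul_single_entry_zero_col: "(\<And>r. A r i = 0) \<Longrightarrow> mmul n A (single_entry i j a) = 0"
  by (simp add: mmul_single_entry_right fun_eq_iff)

lemma in_Mn_mono: "in_Mn n A \<Longrightarrow> n \<le> m \<Longrightarrow> in_Mn m A"
  by (auto simp: in_Mn_def)

lemma in_Mn_mmul: "in_Mn m A \<Longrightarrow> in_Mn m B \<Longrightarrow> in_Mn m (mmul n A B)"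
  by (auto simp: in_Mn_def mmul_def)

lemma in_Mn_add: "in_Mn n A \<Longrightarrow> in_Mn n B \<Longrightarrow> in_Mn n (A + B :: 'a::comm_monoid_add mat)"
  by (auto simp: in_Mn_def)

lemma in_Mn_single_entry: "i < n \<Longrightarrow> j < n \<Longrightarrow> in_Mn n (single_entry i j a)"
  by (auto simp: in_Mn_def single_entry_def)

lemma in_Mn_zero [simp]: "in_Mn n 0"
  by (auto simp: in_Mn_def)

lemma in_Mn_fin_mat: "in_Mn n A \<Longrightarrow> fin_mat A"
  by (auto simp: fin_mat_def)

lemma mmult_eq_mmul: "in_Mn n A \<Longrightarrow> mmult A B = mmul n A B"
proof -
  assume A: "in_Mn n A"
  have "(\<Sum>k | A i k \<noteq> 0. A i k * B k j) = (\<Sum>k<n. A i k * B k j)" for i j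
  proof (rule sum.mono_neutral_left)
    show "{k. A i k \<noteq> 0} \<subseteq> {..<n}"
      using A by (auto simp: in_Mn_def not_less[symmetric])
  qed auto
  then show ?thesis by (simp add: mmult_def mmul_def fun_eq_iff)
qed

lemma mmul_resize: "in_Mn n A \<Longrightarrow> in_Mn m A \<Longrightarrow> mmul n A B = mmul m A B"
  by (metis mmult_eq_mmul)

lemma madj_madj [simp]: "madj (madj A) = (A::'a::star_semiring mat)"
  by (simp add: madj_def star_adj_adj)

lemma madj_add: "madj (A + B) = madj A + madj (B::'a::star_semiring mat)"
  by (simp add: madj_def fun_eq_iff star_adj_add)

lemma adj_sum: "adj (\<Sum>k\<in>S. f k) = (\<Sum>k\<in>S. adj (f k :: 'a::star_semiring))"
  by (induction S rule: infinite_finite_induct) (simp_all add: star_adj_zero star_adj_add)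

lemma madj_mmul: "madj (mmul n A B) = mmul n (madj B) (madj (A::'a::star_semiring mat))"
  by (simp add: madj_def mmul_def fun_eq_iff adj_sum star_adj_mult)

lemma madj_single_entry: "madj (single_entry i j (a::'a::star_semiring)) = single_entry j i (adj a)"
  by (auto simp: madj_def single_entry_def fun_eq_iff star_adj_zero)

lemma in_Mn_madj: "in_Mn n (A::'a::star_semiring mat) \<Longrightarrow> in_Mn n (madj A)"
  by (auto simp: in_Mn_def madj_def star_adj_zero)

section \<open>Projections and Murray--von Neumann equivalence\<close>

lemma mvn_mmulI:
  "in_Mn n V \<Longrightarrow> mmul n (madj V) V = P \<Longrightarrow> mmul n V (madj V) = Q \<Longrightarrow>
    mvn P (Q::'a::star_semiring mat)"
  unfolding mvn_def by (metis in_Mn_fin_mat in_Mn_madj mmult_eq_mmul)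

lemma mvn_mmulE:
  assumes "mvn P (Q::'a::star_semiring mat)"
  obtains V n where "in_Mn n V" "mmul n (madj V) V = P" "mmul n V (madj V) = Q"
  using assms unfolding mvn_def fin_mat_def by (metis in_Mn_madj mmult_eq_mmul)

lemma is_projI:
  "in_Mn n P \<Longrightarrow> madj P = P \<Longrightarrow> mmul n P P = P \<Longrightarrow>
    is_proj (P::'a::star_semiring mat)"
  unfolding is_proj_def by (metis in_Mn_fin_mat mmult_eq_mmul)

lemma is_proj_in_Mn: "is_proj P \<Longrightarrow> \<exists>n. in_Mn n P"
  unfolding is_proj_def fin_mat_def by simp

lemma is_proj_mmul: "is_proj (P::'a::star_semiring mat) \<Longrightarrow> in_Mn n P \<Longrightarrow> mmul n P P = P"
  unfolding is_proj_def by (metis mmult_eq_mmul)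

lemma is_proj_madj: "is_proj P \<Longrightarrow> madj P = P"
  unfolding is_proj_def by simp

lemma is_proj_zero [simp]: "is_proj (0::'a::star_semiring mat)"
  by (rule is_projI[of 0]) (simp_all add: madj_def fun_eq_iff star_adj_zero)

lemma mvn_refl: "is_proj P \<Longrightarrow> mvn P P"
  unfolding is_proj_def mvn_def by metis

lemma mvn_sym: "mvn P Q \<Longrightarrow> mvn Q (P::'a::star_semiring mat)"
  unfolding mvn_def fin_mat_def by (metis in_Mn_madj madj_madj)

lemma mvn_zero_left: "mvn 0 Q \<Longrightarrow> is_proj Q \<Longrightarrow> Q = (0::'a::star_semiring mat)"
proof -
  assume "mvn 0 Q" and Q: "is_proj Q"
  from \<open>mvn 0 Q\<close> obtain V n where V: "in_Mn n V" "mmul n (madj V) V = 0" "mmul n V (madj V) = Q"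
    by (rule mvn_mmulE)
  have "in_Mn n Q" using V in_Mn_mmul in_Mn_madj by metis
  then have "Q = mmul n (mmul n V (madj V)) (mmul n V (madj V))" using Q V(3) is_proj_mmul by metis
  also have "\<dots> = mmul n V (mmul n (mmul n (madj V) V) (madj V))" by (simp only: mmul_assoc)
  finally show ?thesis by (simp add: V(2))
qed

lemma in_Mn_max1: "in_Mn n A \<Longrightarrow> in_Mn (max n m) A"
  and in_Mn_max2: "in_Mn m A \<Longrightarrow> in_Mn (max n m) A"
  by (simp_all add: in_Mn_mono)

text \<open>Over a mere semiring with involution, \<open>V\<^sup>* V = P\<close> does not force \<open>V = Q V P\<close>. The
  compression \<open>Q V P\<close> still implements \<open>P \<sim> Q\<close> and lies in every \<open>M\<^sub>m\<close> containing \<open>P\<close>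
  and \<open>Q\<close>.\<close>
lemma compressed_partial_isometry:
  fixes V P Q :: "'a::star_semiring mat"
  assumes V: "mmul n (madj V) V = P" "mmul n V (madj V) = Q"
    and P: "madj P = P" "mmul n P P = P" and Q: "madj Q = Q" "mmul n Q Q = Q"
  defines "U \<equiv> mmul n (mmul n Q V) P"
  shows "mmul n (madj U) U = P" "mmul n U (madj U) = Q"
proof -
  have VQV: "mmul n (madj V) (mmul n Q V) = P"
  proof -
    have "mmul n (madj V) (mmul n Q V) = mmul n (mmul n (madj V) V) (mmul n (madj V) V)"
      unfolding V(2)[symmetric] by (simp only: mmul_assoc)
    then show ?thesis by (simp only: V(1) P(2))
  qed
  have VPV: "mmul n V (mmul n P (madj V)) = Q"
  proof -
    have "mmul n V (mmul n P (madj V)) = mmul n (mmul n V (madj V)) (mmul n V (madj V))"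
      unfolding V(1)[symmetric] by (simp only: mmul_assoc)
    then show ?thesis by (simp only: V(2) Q(2))
  qed
  have "mmul n (madj U) U = mmul n P (mmul n (mmul n (madj V) (mmul n (mmul n Q Q) V)) P)"
    by (simp only: U_def madj_mmul P(1) Q(1) mmul_assoc)
  then show "mmul n (madj U) U = P" by (simp only: Q(2) VQV P(2))
  have "mmul n U (madj U) = mmul n Q (mmul n (mmul n V (mmul n (mmul n P P) (madj V))) Q)"
    by (simp only: U_def madj_mmul P(1) Q(1) mmul_assoc)
  then show "mmul n U (madj U) = Q" by (simp only: P(2) VPV Q(2))
qed

lemma mvn_in_Mn:
  fixes P Q :: "'a::star_semiring mat"
  assumes P: "is_proj P" and Q: "is_proj Q" and PQ: "mvn P Q" and m: "in_Mn m P" "in_Mn m Q"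
  obtains U where "in_Mn m U" "mmul m (madj U) U = P" "mmul m U (madj U) = Q"
proof -
  obtain V n0 where V: "in_Mn n0 V" "mmul n0 (madj V) V = P" "mmul n0 V (madj V) = Q"
    using PQ by (rule mvn_mmulE)
  define n where "n = max n0 m"
  have Vn: "in_Mn n V" "in_Mn n P" "in_Mn n Q"
    using V(1) m unfolding n_def by (auto intro: in_Mn_max1 in_Mn_max2)
  define U where "U = mmul n (mmul n Q V) P"
  have "mmul n (madj V) V = P" "mmul n V (madj V) = Q"
    using V Vn mmul_resize in_Mn_madj by metis+
  moreover have "madj P = P" "mmul n P P = P" "madj Q = Q" "mmul n Q Q = Q"
    using P Q Vn by (simp_all add: is_proj_madj is_proj_mmul)
  ultimately have "mmul n (madj U) U = P" "mmul n U (madj U) = Q"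
    unfolding U_def by (rule compressed_partial_isometry)+
  moreover have Um: "in_Mn m U" using m by (auto simp: U_def in_Mn_def mmul_def)
  moreover have "in_Mn n U" "in_Mn m (madj U)" "in_Mn n (madj U)"
    using Um by (simp_all add: n_def in_Mn_max2 in_Mn_madj)
  ultimately show thesis using that mmul_resize by metis
qed

lemma mvn_trans:
  fixes P Q R :: "'a::star_semiring mat"
  assumes P: "is_proj P" and Q: "is_proj Q" and R: "is_proj R" and PQ: "mvn P Q" and QR: "mvn Q R"
  shows "mvn P R"
proof -
  obtain n1 n2 n3 where n123: "in_Mn n1 P" "in_Mn n2 Q" "in_Mn n3 R"
    using is_proj_in_Mn[OF P] is_proj_in_Mn[OF Q] is_proj_in_Mn[OF R] by blast
  define n where "n = max n1 (max n2 n3)"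
  have n: "in_Mn n P" "in_Mn n Q" "in_Mn n R"
    using n123 by (simp_all add: n_def in_Mn_max1 in_Mn_max2)
  obtain V where V: "in_Mn n V" "mmul n (madj V) V = P" "mmul n V (madj V) = Q"
    by (rule mvn_in_Mn[OF P Q PQ n(1,2)])
  obtain W where W: "in_Mn n W" "mmul n (madj W) W = Q" "mmul n W (madj W) = R"
    by (rule mvn_in_Mn[OF Q R QR n(2,3)])
  have "mmul n (madj (mmul n W V)) (mmul n W V) = mmul n (madj V) (mmul n (mmul n (madj W) W) V)"
    by (simp only: madj_mmul mmul_assoc)
  also have "\<dots> = mmul n (mmul n (madj V) V) (mmul n (madj V) V)"
    unfolding W(2) V(3)[symmetric] by (simp only: mmul_assoc)
  finally have left: "mmul n (madj (mmul n W V)) (mmul n W V) = P"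
    using P n by (simp add: V(2) is_proj_mmul)
  have "mmul n (mmul n W V) (madj (mmul n W V)) = mmul n W (mmul n (mmul n V (madj V)) (madj W))"
    by (simp only: madj_mmul mmul_assoc)
  also have "\<dots> = mmul n (mmul n W (madj W)) (mmul n W (madj W))"
    unfolding V(3) W(2)[symmetric] by (simp only: mmul_assoc)
  finally have right: "mmul n (mmul n W V) (madj (mmul n W V)) = R"
    using R n by (simp add: W(3) is_proj_mmul)
  show ?thesis using in_Mn_mmul[OF W(1) V(1), of n] left right by (rule mvn_mmulI)
qed

definition proj_equiv :: "'a::star_semiring mat \<Rightarrow> 'a mat \<Rightarrow> bool" where
  "proj_equiv P Q \<longleftrightarrow> is_proj P \<and> is_proj Q \<and> mvn P Q"

lemma proj_equiv_refl: "is_proj P \<Longrightarrow> proj_equiv P P"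
  by (simp add: proj_equiv_def mvn_refl)

lemma proj_equiv_sym: "proj_equiv P Q \<Longrightarrow> proj_equiv Q P"
  unfolding proj_equiv_def using mvn_sym by blast

lemma proj_equiv_trans [trans]: "proj_equiv P Q \<Longrightarrow> proj_equiv Q R \<Longrightarrow> proj_equiv P R"
  unfolding proj_equiv_def using mvn_trans[of P Q R] by blast

lemma proj_equiv_is_proj: "proj_equiv P Q \<Longrightarrow> is_proj P" "proj_equiv P Q \<Longrightarrow> is_proj Q"
  by (auto simp: proj_equiv_def)

lemma in_Mn_dsum: "in_Mn n A \<Longrightarrow> in_Mn m B \<Longrightarrow> in_Mn (n + m) (dsum n A B)"
  and in_Mn_dsum_right: "in_Mn m B \<Longrightarrow> in_Mn (n + m) (dsum n A B)"
  by (auto simp: in_Mn_def dsum_def)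

lemma madj_dsum: "madj (dsum n A B) = dsum n (madj A) (madj (B::'a::star_semiring mat))"
  by (auto simp: madj_def dsum_def fun_eq_iff star_adj_zero)

lemma mmul_dsum:
  assumes "in_Mn n A" "in_Mn n A'" "in_Mn m B" "in_Mn m B'"
  shows "mmul (n + m) (dsum n A B) (dsum n A' B') = dsum n (mmul n A A') (mmul m B B')"
proof (intro ext)
  fix i j
  show "mmul (n + m) (dsum n A B) (dsum n A' B') i j = dsum n (mmul n A A') (mmul m B B') i j"
    using assms unfolding mmul_def sum_lessThan_add_split
    by (cases "i < n"; cases "j < n") (simp_all add: dsum_def)
qed

lemma is_proj_dsum:
  assumes A: "is_proj (A::'a::star_semiring mat)" and B: "is_proj B" and n: "in_Mn n A"
  shows "is_proj (dsum n A B)"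
proof -
  obtain m where m: "in_Mn m B" using B is_proj_in_Mn by blast
  show ?thesis
  proof (rule is_projI)
    show "in_Mn (n + m) (dsum n A B)" using m by (rule in_Mn_dsum_right)
    show "madj (dsum n A B) = dsum n A B" using A B by (simp add: madj_dsum is_proj_madj)
    show "mmul (n + m) (dsum n A B) (dsum n A B) = dsum n A B"
      using A B n m by (simp add: mmul_dsum is_proj_mmul)
  qed
qed

lemma proj_equiv_dsum:
  assumes AA: "proj_equiv A A'" and BB: "proj_equiv B B'" and n: "in_Mn n A" "in_Mn n A'"
  shows "proj_equiv (dsum n A B) (dsum n A' B')"
proof -
  have proj: "is_proj A" "is_proj A'" "is_proj B" "is_proj B'"
    using AA BB by (auto dest: proj_equiv_is_proj)
  obtain m1 m2 where m1m2: "in_Mn m1 B" "in_Mn m2 B'" using proj is_proj_in_Mn by meson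
  define m where "m = max m1 m2"
  have m: "in_Mn m B" "in_Mn m B'" using m1m2 by (simp_all add: m_def in_Mn_max1 in_Mn_max2)
  have "mvn A A'" "mvn B B'" using AA BB by (simp_all add: proj_equiv_def)
  obtain V where V: "in_Mn n V" "mmul n (madj V) V = A" "mmul n V (madj V) = A'"
    using \<open>mvn A A'\<close> by (rule mvn_in_Mn[OF proj(1,2) _ n])
  obtain W where W: "in_Mn m W" "mmul m (madj W) W = B" "mmul m W (madj W) = B'"
    using \<open>mvn B B'\<close> by (rule mvn_in_Mn[OF proj(3,4) _ m])
  have "mvn (dsum n A B) (dsum n A' B')"
  proof (rule mvn_mmulI)
    show "in_Mn (n + m) (dsum n V W)" using W(1) by (rule in_Mn_dsum_right)
    show "mmul (n + m) (madj (dsum n V W)) (dsum n V W) = dsum n A B"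
      "mmul (n + m) (dsum n V W) (madj (dsum n V W)) = dsum n A' B'"
      using V W by (simp_all add: madj_dsum mmul_dsum in_Mn_madj)
  qed
  then show ?thesis using proj n by (simp add: proj_equiv_def is_proj_dsum)
qed

lemma dsum_zero_right: "in_Mn n A \<Longrightarrow> dsum n A 0 = A"
  by (auto simp: in_Mn_def dsum_def fun_eq_iff)

lemma dsum_0: "dsum 0 A B = B"
  by (simp add: dsum_def fun_eq_iff)

lemma dsum_assoc:
  "in_Mn n P \<Longrightarrow> in_Mn m R \<Longrightarrow> dsum n P (dsum m R R') = dsum (n + m) (dsum n P R) R'"
  by (auto simp: in_Mn_def dsum_def fun_eq_iff)

lemma dsum_shift:
  "in_Mn n P \<Longrightarrow> n \<le> n' \<Longrightarrow> dsum n' P R = dsum n P (dsum (n' - n) 0 R)"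
  by (auto simp: in_Mn_def dsum_def fun_eq_iff)

lemma proj_equiv_dsum_zero_left:
  assumes R: "is_proj (R::'a::star_semiring mat)"
  shows "proj_equiv R (dsum d 0 R)"
proof -
  obtain m where m: "in_Mn m R" using R is_proj_in_Mn by blast
  have RR: "madj R = R" "mmul m R R = R" "mmul (d + m) R R = R"
    using R m by (simp_all add: is_proj_madj is_proj_mmul in_Mn_mono)
  define V where "V = (\<lambda>i j. if d \<le> i then R (i - d) j else 0)"
  have "mvn R (dsum d 0 R)"
  proof (rule mvn_mmulI)
    show "in_Mn (d + m) V" using m by (auto simp: in_Mn_def V_def)
    have "mmul (d + m) (madj V) V i j = mmul m (madj R) R i j" for i j
      unfolding mmul_def sum_lessThan_add_split by (simp add: V_def madj_def star_adj_zero)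
    then show "mmul (d + m) (madj V) V = R" using RR by auto
    have "mmul (d + m) V (madj V) i j =
            (if d \<le> i \<and> d \<le> j then mmul (d + m) R (madj R) (i - d) (j - d) else 0)" for i j
      by (cases "d \<le> i"; cases "d \<le> j") (simp_all add: mmul_def V_def madj_def star_adj_zero)
    moreover have "mmul (d + m) R (madj R) = R" using RR by simp
    ultimately show "mmul (d + m) V (madj V) = dsum d 0 R"
      by (auto simp: dsum_def fun_eq_iff)
  qed
  then show ?thesis using R by (simp add: proj_equiv_def is_proj_dsum)
qed

lemma proj_equiv_dsum_shift:
  assumes P: "is_proj P" and R: "is_proj R" and n: "in_Mn n P" "n \<le> n'"
  shows "proj_equiv (dsum n P R) (dsum n' P R)"
proof -
  have "proj_equiv (dsum n P R) (dsum n P (dsum (n' - n) 0 R))"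
    using P R n(1) by (simp add: proj_equiv_dsum proj_equiv_refl proj_equiv_dsum_zero_left)
  then show ?thesis using dsum_shift[OF n] by simp
qed

lemma proj_equiv_dsum_left:
  assumes PP: "proj_equiv P P'" and n: "in_Mn n P" "in_Mn n' P'" and R: "is_proj R"
  shows "proj_equiv (dsum n P R) (dsum n' P' R)"
proof -
  let ?L = "max n n'"
  have P: "is_proj P" "is_proj P'" using PP by (simp_all add: proj_equiv_is_proj)
  have "proj_equiv (dsum n P R) (dsum ?L P R)" using P R n by (intro proj_equiv_dsum_shift) simp_all
  also have "proj_equiv \<dots> (dsum ?L P' R)"
    using PP R n by (intro proj_equiv_dsum proj_equiv_refl in_Mn_max1 in_Mn_max2)
  also have "proj_equiv (dsum n' P' R) (dsum ?L P' R)"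
    using P R n by (intro proj_equiv_dsum_shift) simp_all
  then have "proj_equiv (dsum ?L P' R) (dsum n' P' R)" by (rule proj_equiv_sym)
  finally show ?thesis .
qed

lemma elem_mat_eq_single_entry: "elem_mat a = single_entry 0 0 a"
  by (simp add: elem_mat_def single_entry_def)

lemma in_Mn_elem_mat: "in_Mn 1 (elem_mat a)"
  by (auto simp: in_Mn_def elem_mat_def)

lemma elem_mat_inject: "elem_mat a = elem_mat b \<longleftrightarrow> a = b"
  by (metis elem_mat_def)

lemma elem_mat_zero: "elem_mat 0 = 0"
  by (simp add: elem_mat_def fun_eq_iff)

lemma madj_elem_mat: "madj (elem_mat (a::'a::star_semiring)) = elem_mat (adj a)"
  by (simp add: elem_mat_eq_single_entry madj_single_entry)

lemma mmul_elem_mat: "0 < n \<Longrightarrow> mmul n (elem_mat a) (elem_mat b) = elem_mat (a * b)"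
  by (simp add: elem_mat_eq_single_entry mmul_single_entry_single_entry)

lemma is_proj_elem_mat_iff: "is_proj (elem_mat a) \<longleftrightarrow> is_aproj a"
proof
  assume "is_proj (elem_mat a)"
  then have "madj (elem_mat a) = elem_mat a" "mmul 1 (elem_mat a) (elem_mat a) = elem_mat a"
    using is_proj_madj is_proj_mmul in_Mn_elem_mat by blast+
  then show "is_aproj a" by (simp add: is_aproj_def madj_elem_mat mmul_elem_mat elem_mat_inject)
next
  assume "is_aproj a"
  then show "is_proj (elem_mat a)"
    by (intro is_projI[OF in_Mn_elem_mat]) (simp_all add: is_aproj_def madj_elem_mat mmul_elem_mat)
qed

lemma is_aproj_zero: "is_aproj (0::'a::cstar_algebra)"
  by (simp add: is_aproj_def adj_zero)

lemma orthogonal_aproj_commute: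
  fixes b c :: "'a::cstar_algebra"
  assumes "is_aproj b" "is_aproj c" "b * c = 0"
  shows "c * b = 0"
  using assms by (metis adj_mult adj_zero is_aproj_def)

lemma is_aproj_diff:
  fixes a b :: "'a::cstar_algebra"
  assumes a: "is_aproj a" and b: "is_aproj b" and ba: "proj_le b a"
  shows "is_aproj (a - b)" and "b * (a - b) = 0"
proof -
  have h: "a * a = a" "b * b = b" "b * a = b" "a * b = b" "adj a = a" "adj b = b"
    using a b ba by (auto simp: is_aproj_def proj_le_def)
  have "adj (a - b) = a - b" using h by (metis adj_add add_diff_cancel diff_add_cancel)
  moreover have "(a - b) * (a - b) = a - b" using h by (simp add: algebra_simps)
  ultimately show "is_aproj (a - b)" by (simp add: is_aproj_def)
  show "b * (a - b) = 0" using h by (simp add: algebra_simps)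
qed

lemma proj_equiv_elem_mat_orthogonal_add:
  fixes b c :: "'a::cstar_algebra"
  assumes b: "is_aproj b" and c: "is_aproj c" and bc: "b * c = 0"
  shows "is_aproj (b + c)" and "proj_equiv (elem_mat (b + c)) (dsum 1 (elem_mat b) (elem_mat c))"
proof -
  have cb: "c * b = 0" using b c bc by (rule orthogonal_aproj_commute)
  have h: "b * b = b" "adj b = b" "c * c = c" "adj c = c" using b c by (auto simp: is_aproj_def)
  show bc_proj: "is_aproj (b + c)" using h bc cb by (simp add: is_aproj_def algebra_simps adj_add)
  define V where "V = single_entry 0 0 b + single_entry 1 0 c"
  have madj_V: "madj V = single_entry 0 0 b + single_entry 0 1 c"
    by (simp add: V_def madj_add madj_single_entry h)
  have "mvn (elem_mat (b + c)) (dsum 1 (elem_mat b) (elem_mat c))"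
  proof (rule mvn_mmulI)
    show "in_Mn 2 V" unfolding V_def by (intro in_Mn_add in_Mn_single_entry) auto
    show "mmul 2 (madj V) V = elem_mat (b + c)"
      unfolding madj_V by (simp add: V_def mmul_add_left mmul_add_right mmul_single_entry_single_entry h
          single_entry_add elem_mat_eq_single_entry)
    show "mmul 2 V (madj V) = dsum 1 (elem_mat b) (elem_mat c)"
      unfolding madj_V by (simp add: V_def mmul_add_left mmul_add_right mmul_single_entry_single_entry h bc cb)
         (auto simp: single_entry_def dsum_def elem_mat_def fun_eq_iff)
  qed
  moreover have "is_proj (dsum 1 (elem_mat b) (elem_mat c))"
    using b c by (intro is_proj_dsum in_Mn_elem_mat) (simp_all add: is_proj_elem_mat_iff)
  ultimately show "proj_equiv (elem_mat (b + c)) (dsum 1 (elem_mat b) (elem_mat c))"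
    using bc_proj by (simp add: proj_equiv_def is_proj_elem_mat_iff)
qed

lemma corner_elem_mat:
  fixes Q :: "'a::semiring_0 mat"
  assumes "0 < n" "mmul n (elem_mat a) Q = Q" "mmul n Q (elem_mat a) = Q"
  shows "Q = elem_mat (Q 0 0)"
proof (intro ext)
  fix i j
  have "i \<noteq> 0 \<Longrightarrow> Q i j = 0"
    using fun_cong[OF fun_cong[OF assms(2), of i], of j] assms(1)
    by (simp add: elem_mat_eq_single_entry mmul_single_entry_left)
  moreover have "j \<noteq> 0 \<Longrightarrow> Q i j = 0"
    using fun_cong[OF fun_cong[OF assms(3), of i], of j] assms(1)
    by (simp add: elem_mat_eq_single_entry mmul_single_entry_right)
  ultimately show "Q i j = elem_mat (Q 0 0) i j" by (auto simp: elem_mat_def)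
qed

lemma subprojection_transport:
  fixes W P S E :: "'a::star_semiring mat"
  assumes W: "in_Mn n W" "mmul n (madj W) W = S" "mmul n W (madj W) = E"
    and P: "in_Mn n P" "madj P = P" "mmul n P P = P" "mmul n P S = P" "mmul n S P = P"
  defines "Q \<equiv> mmul n (mmul n W P) (madj W)"
  shows "mvn P Q" "madj Q = Q" "mmul n Q Q = Q" "mmul n Q E = Q" "mmul n E Q = Q"
proof -
  have WW: "mmul n (madj W) (mmul n W X) = mmul n S X" for X
    by (simp only: mmul_assoc[symmetric] W(2))
  have PP: "mmul n P (mmul n P X) = mmul n P X" and PS: "mmul n P (mmul n S X) = mmul n P X"
    and SP: "mmul n S (mmul n P X) = mmul n P X" for X
    by (simp_all only: mmul_assoc[symmetric] P(3-5))
  have Q: "Q = mmul n W (mmul n P (madj W))" by (simp only: Q_def mmul_assoc)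
  have "mmul n (madj (mmul n W P)) (mmul n W P) = P"
    by (simp only: madj_mmul P(2) mmul_assoc WW P(3,5))
  moreover have "mmul n (mmul n W P) (madj (mmul n W P)) = Q"
    by (simp only: madj_mmul P(2) mmul_assoc PP Q)
  moreover have "in_Mn n (mmul n W P)" using W(1) P(1) by (rule in_Mn_mmul)
  ultimately show "mvn P Q" by (metis mvn_mmulI)
  show "madj Q = Q" by (simp add: Q madj_mmul P(2) mmul_assoc)
  show "mmul n Q Q = Q" by (simp only: Q mmul_assoc WW SP PP)
  show "mmul n Q E = Q" by (simp only: Q W(3)[symmetric] mmul_assoc WW PS)
  show "mmul n E Q = Q" by (simp only: Q W(3)[symmetric] mmul_assoc WW SP)
qed

lemma dsum_summand_equiv_subprojection:
  fixes a :: "'a::cstar_algebra"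
  assumes a: "is_aproj a" and P: "is_proj P" "in_Mn n P" and R: "is_proj R"
    and equiv: "mvn (dsum n P R) (elem_mat a)"
  obtains b where "is_aproj b" "proj_le b a" "mvn P (elem_mat b)"
proof -
  obtain m where m: "in_Mn m R" using R is_proj_in_Mn by blast
  let ?N = "n + m + 1" and ?S = "dsum n P R"
  have S: "is_proj ?S" "in_Mn ?N ?S" "in_Mn (n + m) ?S"
    using P R m by (simp_all add: is_proj_dsum in_Mn_mono[OF in_Mn_dsum_right[OF m]])
  have E: "is_proj (elem_mat a)" "in_Mn ?N (elem_mat a)"
    using a in_Mn_mono[OF in_Mn_elem_mat, of ?N a] by (simp_all add: is_proj_elem_mat_iff)
  obtain W where W: "in_Mn ?N W" "mmul ?N (madj W) W = ?S" "mmul ?N W (madj W) = elem_mat a"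
    using equiv by (rule mvn_in_Mn[OF S(1) E(1) _ S(2) E(2)])
  have Pnm: "in_Mn (n + m) P" "in_Mn ?N P" using P(2) by (simp_all add: in_Mn_mono)
  have "mmul (n + m) P ?S = P" "mmul (n + m) ?S P = P"
    using mmul_dsum[OF P(2) P(2) in_Mn_zero m] mmul_dsum[OF P(2) P(2) m in_Mn_zero]
    by (simp_all add: is_proj_mmul P dsum_zero_right)
  then have PS: "mmul ?N P ?S = P" "mmul ?N ?S P = P"
    using mmul_resize[OF Pnm] mmul_resize[OF S(3,2)] by simp_all
  define Q where "Q = mmul ?N (mmul ?N W P) (madj W)"
  have Q: "mvn P Q" "madj Q = Q" "mmul ?N Q Q = Q"
      "mmul ?N Q (elem_mat a) = Q" "mmul ?N (elem_mat a) Q = Q"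
    using subprojection_transport[OF W Pnm(2) is_proj_madj[OF P(1)] is_proj_mmul[OF P(1) Pnm(2)] PS]
    unfolding Q_def by blast+
  define b where "b = Q 0 0"
  have Qb: "Q = elem_mat b" unfolding b_def using Q(4,5) by (intro corner_elem_mat) simp_all
  have "is_aproj b" using Q(2,3)
    unfolding Qb by (simp add: is_aproj_def mmul_elem_mat madj_elem_mat elem_mat_inject)
  moreover have "proj_le b a" using Q(4,5)
    unfolding Qb by (simp add: proj_le_def mmul_elem_mat elem_mat_inject)
  ultimately show thesis using Q(1) Qb that by blast
qed

section \<open>Stable equivalence over the unitization\<close>

lemma Uz_zero: "Uz 0 0 = (0::'a::cstar_algebra unitz)"
  by (simp add: zero_unitz_def)

lemma Uz_sum: "Uz (\<Sum>k\<in>S. f k) 0 = (\<Sum>k\<in>S. Uz (f k) 0 :: 'a::cstar_algebra unitz)"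
proof (induction S rule: infinite_finite_induct)
  case (insert x F)
  then show ?case by (metis plus_unitz.simps add_0 sum.insert)
qed (simp_all add: Uz_zero)

lemma lift_uz_mmul: "lift_uz (mmul n A B) = mmul n (lift_uz A) (lift_uz (B::'a::cstar_algebra mat))"
  by (simp add: lift_uz_def mmul_def fun_eq_iff Uz_sum)

lemma madj_lift_uz: "madj (lift_uz (A::'a::cstar_algebra mat)) = lift_uz (madj A)"
  by (simp add: lift_uz_def madj_def fun_eq_iff)

lemma in_Mn_lift_uz: "in_Mn n (A::'a::cstar_algebra mat) \<Longrightarrow> in_Mn n (lift_uz A)"
  by (simp add: in_Mn_def lift_uz_def Uz_zero)

lemma is_proj_lift_uz: "is_proj (A::'a::cstar_algebra mat) \<Longrightarrow> is_proj (lift_uz A)"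
proof -
  assume A: "is_proj A"
  then obtain n where n: "in_Mn n A" using is_proj_in_Mn by blast
  show ?thesis
    by (rule is_projI[OF in_Mn_lift_uz[OF n]])
       (use A n in \<open>simp_all add: madj_lift_uz is_proj_madj is_proj_mmul flip: lift_uz_mmul\<close>)
qed

lemma in_Mn_unit_uz: "in_Mn k (unit_uz k)"
  by (auto simp: in_Mn_def unit_uz_def)

lemma is_proj_unit_uz: "is_proj (unit_uz k :: 'a::cstar_algebra unitz mat)"
proof (rule is_projI[OF in_Mn_unit_uz])
  show "madj (unit_uz k) = (unit_uz k :: 'a unitz mat)"
    by (auto simp: madj_def unit_uz_def fun_eq_iff adj_zero star_adj_zero)
  have "mmul k (unit_uz k) (unit_uz k) i j = (unit_uz k :: 'a unitz mat) i j" for i j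
    unfolding mmul_def unit_uz_def by (auto simp: if_distrib[where f="\<lambda>x. x * _"] sum.delta' cong: if_cong)
  then show "mmul k (unit_uz k) (unit_uz k) = (unit_uz k :: 'a unitz mat)" by blast
qed

definition stab_uz :: "nat \<Rightarrow> 'a::cstar_algebra mat \<Rightarrow> nat \<Rightarrow> 'a unitz mat" where
  "stab_uz n P k = dsum n (lift_uz P) (unit_uz k)"

lemma k0_eq_iff_stab_uz:
  "k0_eq P Q \<longleftrightarrow>
    (\<exists>n k. in_Mn n P \<and> in_Mn n Q \<and> mvn (stab_uz n P k) (stab_uz n Q k))"
  by (simp add: k0_eq_def stab_uz_def)

lemma in_Mn_stab_uz: "in_Mn n P \<Longrightarrow> in_Mn (n + k) (stab_uz n P k)"
  by (simp add: stab_uz_def in_Mn_dsum in_Mn_lift_uz in_Mn_unit_uz)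

lemma is_proj_stab_uz: "is_proj P \<Longrightarrow> in_Mn n P \<Longrightarrow> is_proj (stab_uz n P k)"
  by (simp add: stab_uz_def is_proj_dsum is_proj_lift_uz is_proj_unit_uz in_Mn_lift_uz)

lemma is_proj_add_single_entry:
  fixes P :: "'a::star_semiring mat"
  assumes P: "is_proj P" "in_Mn t P" and e: "e * e = e" "adj e = e"
  shows "is_proj (P + single_entry t t e)"
proof (rule is_projI)
  have PN: "in_Mn (Suc t) P" using P(2) by (rule in_Mn_mono) simp
  show "in_Mn (Suc t) (P + single_entry t t e)"
    using PN by (intro in_Mn_add in_Mn_single_entry) auto
  have "mmul (Suc t) P (single_entry t t e) = 0" "mmul (Suc t) (single_entry t t e) P = 0"
    using P(2) by (auto intro!: mmul_single_entry_zero_col mmul_single_entry_zero_row simp: in_Mn_def)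
  then show "mmul (Suc t) (P + single_entry t t e) (P + single_entry t t e) = P + single_entry t t e"
    using P PN e
    by (simp add: mmul_add_left mmul_add_right is_proj_mmul mmul_single_entry_single_entry)
  show "madj (P + single_entry t t e) = P + single_entry t t e"
    using P e by (simp add: madj_add madj_single_entry is_proj_madj)
qed

lemma mvn_add_single_entry:
  fixes P Q :: "'a::star_semiring mat"
  assumes P: "is_proj P" "in_Mn t P" and Q: "is_proj Q" "in_Mn t Q" and PQ: "mvn P Q"
    and e: "e * e = e" "adj e = e"
  shows "mvn (P + single_entry t t e) (Q + single_entry t t e)"
proof -
  obtain V where V: "in_Mn t V" "mmul t (madj V) V = P" "mmul t V (madj V) = Q"
    using PQ by (rule mvn_in_Mn[OF P(1) Q(1) _ P(2) Q(2)])
  have VN: "in_Mn (Suc t) V" "in_Mn (Suc t) (madj V)"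
    using in_Mn_mono[OF V(1)] in_Mn_mono[OF in_Mn_madj[OF V(1)]] by simp_all
  have V': "mmul (Suc t) (madj V) V = P" "mmul (Suc t) V (madj V) = Q"
    using V mmul_resize[OF VN(1) V(1)] mmul_resize[OF VN(2) in_Mn_madj[OF V(1)]] by simp_all
  have z: "mmul (Suc t) V (single_entry t t e) = 0" "mmul (Suc t) (madj V) (single_entry t t e) = 0"
     "mmul (Suc t) (single_entry t t e) V = 0" "mmul (Suc t) (single_entry t t e) (madj V) = 0"
    using V(1) in_Mn_madj[OF V(1)]
    by (auto intro!: mmul_single_entry_zero_col mmul_single_entry_zero_row simp: in_Mn_def)
  show ?thesis
  proof (rule mvn_mmulI)
    show "in_Mn (Suc t) (V + single_entry t t e)"
      using VN by (intro in_Mn_add in_Mn_single_entry) auto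
    show "mmul (Suc t) (madj (V + single_entry t t e)) (V + single_entry t t e) = P + single_entry t t e"
      "mmul (Suc t) (V + single_entry t t e) (madj (V + single_entry t t e)) = Q + single_entry t t e"
      by (simp_all add: madj_add madj_single_entry e mmul_add_left mmul_add_right z V'
          mmul_single_entry_single_entry)
  qed
qed

lemma mvn_move_corner:
  fixes S :: "'a::star_semiring mat"
  assumes S: "is_proj S" "in_Mn t S" "\<And>j. S 0 j = 0" "\<And>i. S i 0 = 0" and t: "0 < t"
    and pu: "p * p = p" "u * u = u" "p * u = 0" "u * p = 0" "adj p = p" "adj u = u"
  shows "mvn (S + single_entry t t p + single_entry t t u) (single_entry 0 0 p + S + single_entry t t u)"
proof (rule mvn_mmulI)
  define W where "W = single_entry 0 t p + single_entry t t u + S"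
  have SN: "in_Mn (Suc t) S" using S(2) by (rule in_Mn_mono) simp
  have SS: "mmul (Suc t) S S = S" "madj S = S" using S(1) SN by (simp_all add: is_proj_mmul is_proj_madj)
  have z: "\<And>i a. mmul (Suc t) (single_entry i 0 a) S = 0" "\<And>i a. mmul (Suc t) (single_entry i t a) S = 0"
          "\<And>j a. mmul (Suc t) S (single_entry 0 j a) = 0" "\<And>j a. mmul (Suc t) S (single_entry t j a) = 0"
    using S(2-4) by (auto intro!: mmul_single_entry_zero_col mmul_single_entry_zero_row simp: in_Mn_def)
  have madj_W: "madj W = single_entry t 0 p + single_entry t t u + S"
    by (simp add: W_def madj_add madj_single_entry SS pu)
  show "in_Mn (Suc t) W" unfolding W_def using SN by (intro in_Mn_add in_Mn_single_entry) auto
  show "mmul (Suc t) (madj W) W = S + single_entry t t p + single_entry t t u"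
    "mmul (Suc t) W (madj W) = single_entry 0 0 p + S + single_entry t t u"
    unfolding madj_W using t
    by (simp_all add: W_def mmul_add_left mmul_add_right z SS mmul_single_entry_single_entry pu add_ac)
qed

lemma unitz_proj_complement:
  fixes x :: "'a::cstar_algebra"
  assumes "is_aproj x"
  defines "p \<equiv> Uz x 0" and "u \<equiv> Uz (- x) 1"
  shows "p * p = p" "u * u = u" "p * u = 0" "u * p = 0" "adj p = p" "adj u = u"
proof -
  have "x * x = x" "adj x = x" "adj (- x) = - x"
    using assms by (auto simp: is_aproj_def) (metis add.right_inverse adj_add adj_zero add_eq_0_iff)
  then show "p * p = p" "u * u = u" "p * u = 0" "u * p = 0" "adj p = p" "adj u = u"
    by (simp_all add: p_def u_def Uz_zero scaleC_one)
qed

lemma proj_equiv_stab_uz_move_corner: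
  fixes x :: "'a::cstar_algebra" and k :: nat
  assumes x: "is_aproj x" and W: "is_proj W" and n: "0 < n" "in_Mn n (dsum 1 (elem_mat x) W)"
  defines "u \<equiv> single_entry (n + k) (n + k) (Uz (- x) 1)"
  shows "proj_equiv (stab_uz n (dsum 1 0 W) (Suc k)) (stab_uz n (dsum 1 (elem_mat x) W) k + u)"
proof -
  let ?t = "n + k" and ?p = "Uz x 0 :: 'a unitz" and ?u = "Uz (- x) 1 :: 'a unitz"
  note pu = unitz_proj_complement[OF x]
  have n0W: "in_Mn n (dsum 1 0 W)" using n(2) by (auto simp: in_Mn_def dsum_def split: if_splits)
  define S where "S = stab_uz n (dsum 1 0 W) k"
  have "is_proj (dsum 1 0 W)" using W by (simp add: is_proj_dsum)
  then have S: "is_proj S" "in_Mn ?t S"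
    using n0W by (simp_all add: S_def in_Mn_stab_uz is_proj_stab_uz)
  have S0: "S 0 j = 0" "S i 0 = 0" for i j
    using n(1) by (simp_all add: S_def stab_uz_def dsum_def lift_uz_def Uz_zero)
  have x_split: "stab_uz n (dsum 1 (elem_mat x) W) k = single_entry 0 0 ?p + S"
    using n(1) by (auto simp: S_def stab_uz_def dsum_def lift_uz_def Uz_zero single_entry_def
        elem_mat_def fun_eq_iff)
  have "stab_uz n (dsum 1 0 W) (Suc k) = S + single_entry ?t ?t (?p + ?u)"
    by (auto simp: S_def stab_uz_def dsum_def unit_uz_def single_entry_def fun_eq_iff)
  then have zero_split: "stab_uz n (dsum 1 0 W) (Suc k) = S + single_entry ?t ?t ?p + u"
    by (simp add: u_def add.assoc single_entry_add)
  have "mvn (stab_uz n (dsum 1 0 W) (Suc k)) (stab_uz n (dsum 1 (elem_mat x) W) k + u)"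
    unfolding zero_split x_split u_def using S S0 n(1) pu by (intro mvn_move_corner) simp_all
  moreover have "is_proj (stab_uz n (dsum 1 0 W) (Suc k))"
    using \<open>is_proj (dsum 1 0 W)\<close> n0W by (rule is_proj_stab_uz)
  moreover have "is_proj (stab_uz n (dsum 1 (elem_mat x) W) k + u)"
    using x W n(2) pu unfolding u_def
    by (intro is_proj_add_single_entry is_proj_stab_uz in_Mn_stab_uz is_proj_dsum in_Mn_elem_mat)
       (simp_all add: is_proj_elem_mat_iff)
  ultimately show ?thesis by (simp add: proj_equiv_def)
qed

text \<open>\<open>K\<^sub>0(A)\<close> is a group, but \<open>k0_eq\<close> is stable equivalence over the unitization, so the common
  summand \<open>x\<close> has to be cancelled by hand: add \<open>1 - x\<close> in a fresh corner of both sides of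
  \<open>x \<oplus> Y \<oplus> 1\<^sub>k \<sim> x \<oplus> Z \<oplus> 1\<^sub>k\<close>, and move \<open>x\<close> next to it to obtain
  \<open>0 \<oplus> Y \<oplus> 1\<^sub>k\<^sub>+\<^sub>1 \<sim> 0 \<oplus> Z \<oplus> 1\<^sub>k\<^sub>+\<^sub>1\<close>.\<close>
lemma k0_eq_cancel_elem_mat:
  fixes x :: "'a::cstar_algebra"
  assumes x: "is_aproj x" and Y: "is_proj Y" and Z: "is_proj Z"
    and eq: "k0_eq (dsum 1 (elem_mat x) Y) (dsum 1 (elem_mat x) Z)"
  shows "k0_eq (dsum 1 0 Y) (dsum 1 0 Z)"
proof -
  obtain n k where nY: "in_Mn n (dsum 1 (elem_mat x) Y)" and nZ: "in_Mn n (dsum 1 (elem_mat x) Z)"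
    and equiv: "mvn (stab_uz n (dsum 1 (elem_mat x) Y) k) (stab_uz n (dsum 1 (elem_mat x) Z) k)"
    using eq unfolding k0_eq_iff_stab_uz by blast
  have n0: "in_Mn n (dsum 1 0 Y)" "in_Mn n (dsum 1 0 Z)"
    using nY nZ by (auto simp: in_Mn_def dsum_def split: if_splits)
  show ?thesis
  proof (cases "n = 0")
    case True
    then have "dsum 1 (elem_mat x) Y 0 0 = 0" using nY by (simp add: in_Mn_def)
    then have "x = 0" by (simp add: dsum_def elem_mat_def)
    then show ?thesis using eq by (simp add: elem_mat_zero)
  next
    case False
    then have n_pos: "0 < n" by simp
    define u where "u = single_entry (n + k) (n + k) (Uz (- x) 1)"
    have X: "is_proj (elem_mat x)" using x by (simp add: is_proj_elem_mat_iff)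
    have proj: "is_proj (stab_uz n (dsum 1 (elem_mat x) W) k)"
      "in_Mn (n + k) (stab_uz n (dsum 1 (elem_mat x) W) k)" if "W = Y \<or> W = Z" for W
      using that is_proj_dsum[OF X _ in_Mn_elem_mat] Y Z nY nZ
      by (auto intro: is_proj_stab_uz in_Mn_stab_uz)
    note u_proj = unitz_proj_complement(2,6)[OF x]
    have "mvn (stab_uz n (dsum 1 (elem_mat x) Y) k + u) (stab_uz n (dsum 1 (elem_mat x) Z) k + u)"
      unfolding u_def using proj equiv u_proj by (intro mvn_add_single_entry) simp_all
    moreover have "is_proj (stab_uz n (dsum 1 (elem_mat x) W) k + u)" if "W = Y \<or> W = Z" for W
      using proj[OF that] u_proj unfolding u_def by (intro is_proj_add_single_entry) simp_all
    ultimately have "proj_equiv (stab_uz n (dsum 1 (elem_mat x) Y) k + u) (stab_uz n (dsum 1 (elem_mat x) Z) k + u)"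
      by (simp add: proj_equiv_def)
    then have "proj_equiv (stab_uz n (dsum 1 0 Y) (Suc k)) (stab_uz n (dsum 1 0 Z) (Suc k))"
      using proj_equiv_stab_uz_move_corner[OF x Y n_pos nY, of k]
        proj_equiv_stab_uz_move_corner[OF x Z n_pos nZ, of k]
      unfolding u_def by (meson proj_equiv_sym proj_equiv_trans)
    then show ?thesis unfolding k0_eq_iff_stab_uz proj_equiv_def using n0 by blast
  qed
qed

section \<open>Interpolation in \<open>K\<^sub>0(A)\<^sup>+\<close>\<close>

lemma k0_le_refl: "is_proj P \<Longrightarrow> k0_le (k0cls P) (k0cls P)"
  unfolding k0_le_def by (metis is_proj_in_Mn dsum_zero_right is_proj_zero)

lemma k0_le_zero_left: "g \<in> K0pos \<Longrightarrow> k0_le (k0cls (elem_mat (0::'a::cstar_algebra))) g"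
  unfolding k0_le_def K0pos_def elem_mat_zero by (metis imageE mem_Collect_eq dsum_0 is_proj_zero in_Mn_zero)

lemma orthogonal_add_proj_le:
  fixes b c d :: "'a::cstar_algebra"
  assumes b: "is_aproj b" and c: "is_aproj c" and d: "is_aproj d"
    and bd: "b * d = 0" and cd: "proj_le c d"
  shows "b * c = 0" "proj_le b (b + c)" "proj_le (b + c) (b + d)"
proof -
  have h: "b * b = b" "c * d = c" "d * c = c" using b cd by (auto simp: is_aproj_def proj_le_def)
  have db: "d * b = 0" using b d bd by (rule orthogonal_aproj_commute)
  show bc: "b * c = 0" using bd h by (metis mult.assoc mult_zero_left)
  have cb: "c * b = 0" using b c bc by (rule orthogonal_aproj_commute)
  show "proj_le b (b + c)" "proj_le (b + c) (b + d)"
    using h bc cb bd db by (simp_all add: proj_le_def algebra_simps)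
qed

lemma proj_chain_append:
  fixes q q' :: "nat \<Rightarrow> 'a::cstar_algebra"
  assumes q: "\<forall>k\<le>i. is_aproj (q k) \<and> k0cls (elem_mat (q k)) = g k"
      "\<forall>k<i. proj_le (q k) (q (Suc k))"
    and q': "\<forall>k. i \<le> k \<and> k \<le> j \<longrightarrow> is_aproj (q' k) \<and> k0cls (elem_mat (q' k)) = g k"
      "\<forall>k. i \<le> k \<and> k < j \<longrightarrow> proj_le (q' k) (q' (Suc k))"
    and glue: "q' i = q i" and "i \<le> j"
  shows "(\<forall>k\<le>j. is_aproj (if k \<le> i then q k else q' k) \<and>
            k0cls (elem_mat (if k \<le> i then q k else q' k)) = g k) \<and>
         (\<forall>k<j. proj_le (if k \<le> i then q k else q' k) (if Suc k \<le> i then q (Suc k) else q' (Suc k)))"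
proof (rule conjI; intro allI impI)
  show "is_aproj (if k \<le> i then q k else q' k) \<and>
      k0cls (elem_mat (if k \<le> i then q k else q' k)) = g k" if "k \<le> j" for k
    using q(1) q'(1) that by simp
  show "proj_le (if k \<le> i then q k else q' k) (if Suc k \<le> i then q (Suc k) else q' (Suc k))"
    if "k < j" for k
  proof -
    consider "Suc k \<le> i" | "k = i" | "i < k" by linarith
    then show ?thesis
    proof cases
      case 1
      then show ?thesis using q(2) by simp
    next
      case 2
      then show ?thesis using q'(2) glue[symmetric] that by simp
    next
      case 3
      then show ?thesis using q'(2) that by simp
    qed
  qed
qed

lemma le_last_if_bounded_Suc_mono:
  fixes f :: "nat \<Rightarrow> 'b::preorder"
  assumes "\<forall>i<N. f i \<le> f (Suc i)" and "n \<le> N"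
  shows "f n \<le> f N"
  using assms by (induction N) (auto simp: le_Suc_eq intro: order_trans)

context
  fixes A :: "'a::cstar_algebra itself"
  assumes canc: "has_cancellation A"
begin

lemma k0_eq_iff_mvn:
  "is_proj (P::'a mat) \<Longrightarrow> is_proj Q \<Longrightarrow> k0_eq P Q \<longleftrightarrow> mvn P Q"
  using canc unfolding has_cancellation_def by blast

lemma k0cls_eq_iff:
  "is_proj (P::'a mat) \<Longrightarrow> is_proj Q \<Longrightarrow> k0cls P = k0cls Q \<longleftrightarrow> proj_equiv P Q"
proof
  assume P: "is_proj P" and Q: "is_proj Q" and eq: "k0cls P = k0cls Q"
  have "Q \<in> k0cls Q" using Q by (simp add: k0cls_def k0_eq_iff_mvn mvn_refl)
  then have "Q \<in> k0cls P" using eq by simp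
  then show "proj_equiv P Q" using P Q by (simp add: k0cls_def k0_eq_iff_mvn proj_equiv_def)
next
  assume P: "is_proj P" and Q: "is_proj Q" and PQ: "proj_equiv P Q"
  have "mvn P R \<longleftrightarrow> mvn Q R" if "is_proj R" for R
    using PQ P Q that unfolding proj_equiv_def by (meson mvn_sym mvn_trans)
  then show "k0cls P = k0cls Q"
    using P Q by (auto simp: k0cls_def k0_eq_iff_mvn)
qed

lemma proj_equiv_cancel_elem_mat:
  assumes x: "is_aproj (x::'a)" and Y: "is_proj Y" and Z: "is_proj Z"
    and eq: "proj_equiv (dsum 1 (elem_mat x) Y) (dsum 1 (elem_mat x) Z)"
  shows "proj_equiv Y Z"
proof -
  have "k0_eq (dsum 1 (elem_mat x) Y) (dsum 1 (elem_mat x) Z)"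
    using eq k0_eq_iff_mvn by (simp add: proj_equiv_def)
  then have "k0_eq (dsum 1 0 Y) (dsum 1 0 Z)" by (rule k0_eq_cancel_elem_mat[OF x Y Z])
  then have "proj_equiv (dsum 1 0 Y) (dsum 1 0 Z)"
    using Y Z k0_eq_iff_mvn by (simp add: proj_equiv_def is_proj_dsum)
  then show ?thesis
    using proj_equiv_dsum_zero_left[OF Y] proj_equiv_dsum_zero_left[OF Z]
    by (meson proj_equiv_sym proj_equiv_trans)
qed

lemma k0_le_k0clsE:
  assumes le: "k0_le (k0cls P) h" and P: "is_proj (P::'a mat)" "in_Mn n P"
  obtains R where "is_proj R" "h = k0cls (dsum n P R)"
proof -
  obtain P' R n' where P': "is_proj P'" "in_Mn n' P'" "k0cls P = k0cls P'"
    and R: "is_proj R" and h: "h = k0cls (dsum n' P' R)"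
    using le unfolding k0_le_def by blast
  have "proj_equiv (dsum n P R) (dsum n' P' R)"
    using P P' R by (intro proj_equiv_dsum_left) (simp_all add: k0cls_eq_iff)
  then have "h = k0cls (dsum n P R)"
    using P P' R h by (simp add: k0cls_eq_iff is_proj_dsum proj_equiv_sym)
  with R show thesis by (rule that)
qed

lemma k0_le_trans:
  assumes gh: "k0_le g h" and hl: "k0_le h (l::'a mat set)"
  shows "k0_le g l"
proof -
  obtain P R n where P: "is_proj P" "in_Mn n P" and R: "is_proj R"
    and g: "g = k0cls P" and h: "h = k0cls (dsum n P R)"
    using gh unfolding k0_le_def by blast
  obtain m where m: "in_Mn m R" using R is_proj_in_Mn by blast
  obtain R' where R': "is_proj R'" and "l = k0cls (dsum (n + m) (dsum n P R) R')"
    using hl is_proj_dsum[OF P(1) R P(2)] in_Mn_dsum[OF P(2) m] unfolding h by (rule k0_le_k0clsE)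
  then have "l = k0cls (dsum n P (dsum m R R'))" using P(2) m by (simp add: dsum_assoc)
  moreover have "is_proj (dsum m R R')" using R R' m by (rule is_proj_dsum)
  ultimately show ?thesis unfolding k0_le_def using P g by blast
qed

lemma proj_le_equiv_imp_eq:
  fixes a b :: 'a
  assumes a: "is_aproj a" and b: "is_aproj b" and ba: "proj_le b a"
    and eq: "proj_equiv (elem_mat b) (elem_mat a)"
  shows "b = a"
proof -
  have d: "is_aproj (a - b)" "b * (a - b) = 0" using a b ba by (rule is_aproj_diff)+
  have "proj_equiv (dsum 1 (elem_mat b) 0) (elem_mat a)"
    using eq dsum_zero_right[OF in_Mn_elem_mat, of b] by simp
  also have "proj_equiv (elem_mat a) (dsum 1 (elem_mat b) (elem_mat (a - b)))"
    using proj_equiv_elem_mat_orthogonal_add(2)[OF b d] by simp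
  finally have "proj_equiv 0 (elem_mat (a - b))"
    using d(1) by (elim proj_equiv_cancel_elem_mat[OF b is_proj_zero, rotated]) (simp add: is_proj_elem_mat_iff)
  then have "elem_mat (a - b) = elem_mat 0"
    unfolding elem_mat_zero proj_equiv_def by (blast intro: mvn_zero_left)
  then show ?thesis by (simp add: elem_mat_inject)
qed

lemma k0_le_between_elem_matE:
  fixes a b :: 'a
  assumes a: "is_aproj a" and b: "is_aproj b"
    and bg: "k0_le (k0cls (elem_mat b)) g" and ga: "k0_le g (k0cls (elem_mat a))"
  obtains R R' m where "is_proj R" "is_proj R'" "in_Mn m R" "g = k0cls (dsum 1 (elem_mat b) R)"
    "proj_equiv (elem_mat a) (dsum 1 (elem_mat b) (dsum m R R'))"
proof -
  have B: "is_proj (elem_mat b)" and Aa: "is_proj (elem_mat a)"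
    using a b by (simp_all add: is_proj_elem_mat_iff)
  obtain R where R: "is_proj R" and g: "g = k0cls (dsum 1 (elem_mat b) R)"
    using bg B in_Mn_elem_mat by (rule k0_le_k0clsE)
  obtain m where m: "in_Mn m R" using R is_proj_in_Mn by blast
  have BR: "is_proj (dsum 1 (elem_mat b) R)" using B R in_Mn_elem_mat by (rule is_proj_dsum)
  obtain R' where R': "is_proj R'"
    and a_cls: "k0cls (elem_mat a) = k0cls (dsum (1 + m) (dsum 1 (elem_mat b) R) R')"
    using ga BR in_Mn_dsum[OF in_Mn_elem_mat m] unfolding g by (rule k0_le_k0clsE)
  have Y: "is_proj (dsum m R R')" using R R' m by (rule is_proj_dsum)
  have "dsum (1 + m) (dsum 1 (elem_mat b) R) R' = dsum 1 (elem_mat b) (dsum m R R')"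
    using dsum_assoc[OF in_Mn_elem_mat m] by simp
  then have "proj_equiv (elem_mat a) (dsum 1 (elem_mat b) (dsum m R R'))"
    using a_cls k0cls_eq_iff[OF Aa is_proj_dsum[OF B Y in_Mn_elem_mat]] by simp
  with R R' m g show thesis by (rule that)
qed

lemma k0_le_interpolate:
  fixes a b :: 'a
  assumes a: "is_aproj a" and b: "is_aproj b" and ba: "proj_le b a"
    and bg: "k0_le (k0cls (elem_mat b)) g" and ga: "k0_le g (k0cls (elem_mat a))"
  obtains c where "is_aproj c" "proj_le b c" "proj_le c a" "k0cls (elem_mat c) = g"
proof -
  obtain R R' m where R: "is_proj R" "is_proj R'" "in_Mn m R"
    and g: "g = k0cls (dsum 1 (elem_mat b) R)"
    and a_equiv: "proj_equiv (elem_mat a) (dsum 1 (elem_mat b) (dsum m R R'))"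
    by (rule k0_le_between_elem_matE[OF a b bg ga])
  have B: "is_proj (elem_mat b)" using b by (simp add: is_proj_elem_mat_iff)
  have Y: "is_proj (dsum m R R')" using R by (simp add: is_proj_dsum)
  define d where "d = a - b"
  have d: "is_aproj d" "b * d = 0" "a = b + d" using is_aproj_diff[OF a b ba] by (simp_all add: d_def)
  have "proj_equiv (dsum 1 (elem_mat b) (elem_mat d)) (elem_mat a)"
    using proj_equiv_elem_mat_orthogonal_add(2)[OF b d(1,2)] d(3) by (simp add: proj_equiv_sym)
  also note a_equiv
  finally have "proj_equiv (elem_mat d) (dsum m R R')"
    using d(1) by (elim proj_equiv_cancel_elem_mat[OF b _ Y, rotated]) (simp add: is_proj_elem_mat_iff)
  then have "mvn (dsum m R R') (elem_mat d)" unfolding proj_equiv_def using mvn_sym by blast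
  then obtain c0 where c0: "is_aproj c0" "proj_le c0 d" "mvn R (elem_mat c0)"
    by (rule dsum_summand_equiv_subprojection[OF d(1) R(1,3,2)])
  have "proj_equiv (elem_mat c0) R"
    using c0(1,3) R(1) mvn_sym unfolding proj_equiv_def by (simp add: is_proj_elem_mat_iff)
  note between = orthogonal_add_proj_le[OF b c0(1) d(1,2) c0(2)]
  have "proj_equiv (elem_mat (b + c0)) (dsum 1 (elem_mat b) (elem_mat c0))"
    using proj_equiv_elem_mat_orthogonal_add(2)[OF b c0(1) between(1)] .
  also have "proj_equiv \<dots> (dsum 1 (elem_mat b) R)"
    using B \<open>proj_equiv (elem_mat c0) R\<close> in_Mn_elem_mat by (intro proj_equiv_dsum proj_equiv_refl)
  finally have "k0cls (elem_mat (b + c0)) = g"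
    unfolding g by (simp add: k0cls_eq_iff proj_equiv_is_proj)
  then show thesis
    using that proj_equiv_elem_mat_orthogonal_add(1)[OF b c0(1) between(1)] between(2,3) d(3)
    by simp
qed

lemma k0_le_chain:
  fixes g :: "nat \<Rightarrow> 'a mat set"
  assumes steps: "\<forall>j. lo \<le> j \<and> j < hi \<longrightarrow> k0_le (g j) (g (Suc j))"
    and P: "is_proj P" "g lo = k0cls P" and j: "lo \<le> j" "j \<le> hi"
  shows "k0_le (g lo) (g j)"
  using j
proof (induction j rule: dec_induct)
  case base
  show ?case using k0_le_refl[OF P(1)] P(2) by simp
next
  case (step j)
  then have "k0_le (g lo) (g j)" "k0_le (g j) (g (Suc j))" using steps by simp_all
  then show ?case by (rule k0_le_trans)
qed

lemma proj_chain_between: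
  fixes a b :: 'a
  assumes "lo \<le> hi" and "\<forall>j. lo \<le> j \<and> j < hi \<longrightarrow> k0_le (g j) (g (Suc j))"
    and "is_aproj a" "is_aproj b" "proj_le b a" "g lo = k0cls (elem_mat b)" "g hi = k0cls (elem_mat a)"
  shows "\<exists>q. q lo = b \<and> q hi = a \<and>
    (\<forall>j. lo \<le> j \<and> j \<le> hi \<longrightarrow> is_aproj (q j) \<and> k0cls (elem_mat (q j)) = g j) \<and>
    (\<forall>j. lo \<le> j \<and> j < hi \<longrightarrow> proj_le (q j) (q (Suc j)))"
  using assms
proof (induction hi arbitrary: a rule: nat_induct_at_least)
  case base
  have "k0cls (elem_mat b) = k0cls (elem_mat a)" using base(5,6) by simp
  moreover have "is_proj (elem_mat b)" "is_proj (elem_mat a)"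
    using base(2,3) by (simp_all add: is_proj_elem_mat_iff)
  ultimately have "proj_equiv (elem_mat b) (elem_mat a)" by (simp add: k0cls_eq_iff)
  then have "b = a" by (rule proj_le_equiv_imp_eq[OF base(2-4)])
  moreover have "j = lo" if "lo \<le> j" "j \<le> lo" for j using that by simp
  ultimately show ?case using base(3,5) by (intro exI[of _ "\<lambda>_. b"]) fastforce
next
  case (Suc h)
  have "k0_le (k0cls (elem_mat b)) (g h)"
    using k0_le_chain[of lo "Suc h" g "elem_mat b" h] Suc by (simp add: is_proj_elem_mat_iff)
  moreover have "k0_le (g h) (k0cls (elem_mat a))"
    using Suc.prems(1)[rule_format, of h] Suc.hyps Suc.prems(6) by simp
  ultimately obtain c where c: "is_aproj c" "proj_le b c" "proj_le c a" "k0cls (elem_mat c) = g h"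
    by (rule k0_le_interpolate[OF Suc.prems(2-4)])
  obtain q where q: "q lo = b" "q h = c"
      "\<forall>j. lo \<le> j \<and> j \<le> h \<longrightarrow> is_aproj (q j) \<and> k0cls (elem_mat (q j)) = g j"
      "\<forall>j. lo \<le> j \<and> j < h \<longrightarrow> proj_le (q j) (q (Suc j))"
    using Suc.IH[OF _ c(1) Suc.prems(3) c(2) Suc.prems(5) c(4)[symmetric]] Suc.prems(1) by simp blast
  let ?q = "q(Suc h := a)"
  have "?q lo = b" "?q (Suc h) = a" using q(1) Suc.hyps by simp_all
  moreover have "\<forall>j. lo \<le> j \<and> j \<le> Suc h \<longrightarrow> is_aproj (?q j) \<and> k0cls (elem_mat (?q j)) = g j"
    using q(3) Suc.prems by (auto simp: le_Suc_eq)
  moreover have "\<forall>j. lo \<le> j \<and> j < Suc h \<longrightarrow> proj_le (?q j) (?q (Suc j))"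
    using q(2,4) c(3) by (auto simp: less_Suc_eq)
  ultimately show ?case by blast
qed

lemma proj_seq_refine_from_zero:
  fixes p :: "nat \<Rightarrow> 'a"
  assumes "m 0 = 0"
    and "\<forall>n\<le>N. is_aproj (p n)" "\<forall>n<N. proj_le (p n) (p (Suc n))"
    and "\<forall>n<N. m n \<le> m (Suc n)"
    and "\<forall>k<m N. k0_le (g k) (g (Suc k))" "\<forall>n\<le>N. g (m n) = k0cls (elem_mat (p n))"
  shows "\<exists>q. (\<forall>k\<le>m N. is_aproj (q k) \<and> k0cls (elem_mat (q k)) = g k) \<and>
        (\<forall>k<m N. proj_le (q k) (q (Suc k))) \<and> (\<forall>n\<le>N. p n = q (m n))"
  using assms(2-)
proof (induction N)
  case 0
  then show ?case using assms(1) by (intro exI[of _ "\<lambda>_. p 0"]) auto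
next
  case (Suc N)
  have mle: "m N \<le> m (Suc N)" using Suc.prems(3) by simp
  have "\<exists>q. (\<forall>k\<le>m N. is_aproj (q k) \<and> k0cls (elem_mat (q k)) = g k) \<and>
      (\<forall>k<m N. proj_le (q k) (q (Suc k))) \<and> (\<forall>n\<le>N. p n = q (m n))"
    using Suc.IH Suc.prems mle by (simp add: order_less_le_trans)
  then obtain q where q: "\<forall>k\<le>m N. is_aproj (q k) \<and> k0cls (elem_mat (q k)) = g k"
      "\<forall>k<m N. proj_le (q k) (q (Suc k))" "\<forall>n\<le>N. p n = q (m n)"
    by blast
  obtain q2 where q2: "q2 (m N) = p N" "q2 (m (Suc N)) = p (Suc N)"
      "\<forall>k. m N \<le> k \<and> k \<le> m (Suc N) \<longrightarrow>
        is_aproj (q2 k) \<and> k0cls (elem_mat (q2 k)) = g k"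
      "\<forall>k. m N \<le> k \<and> k < m (Suc N) \<longrightarrow> proj_le (q2 k) (q2 (Suc k))"
    using proj_chain_between[OF mle, of g "p (Suc N)" "p N"] Suc.prems by auto
  have q2q: "q2 (m N) = q (m N)" using q(3) q2(1) by simp
  let ?q = "\<lambda>k. if k \<le> m N then q k else q2 k"
  have "\<forall>n\<le>Suc N. p n = ?q (m n)"
  proof (intro allI impI)
    fix n assume "n \<le> Suc N"
    show "p n = ?q (m n)"
    proof (cases "n = Suc N")
      case True
      then show ?thesis using q2(2) q2q mle by auto
    next
      case False
      then have "m n \<le> m N"
        using \<open>n \<le> Suc N\<close> Suc.prems(3) le_last_if_bounded_Suc_mono[of N m n] by simp
      then show ?thesis using q(3) \<open>n \<le> Suc N\<close> False by simp
    qed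
  qed
  with proj_chain_append[OF q(1,2) q2(3,4) q2q mle] show ?case by (intro exI[of _ ?q]) simp
qed

end

lemma proj_seq_refine:
  fixes A :: "'a::cstar_algebra itself" and p :: "nat \<Rightarrow> 'a"
  assumes canc: "has_cancellation A"
    and "1 \<le> N"
    and "\<forall>n\<in>{1..N}. is_aproj (p n)"
    and "\<forall>n. 1 \<le> n \<and> n < N \<longrightarrow> proj_le (p n) (p (Suc n))"
    and "\<forall>k\<in>{1..M}. g k \<in> K0pos"
    and "\<forall>k. 1 \<le> k \<and> k < M \<longrightarrow> k0_le (g k) (g (Suc k))"
    and "\<forall>n\<in>{1..N}. 1 \<le> m n \<and> m n \<le> M"
    and "\<forall>n. 1 \<le> n \<and> n < N \<longrightarrow> m n \<le> m (Suc n)"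
    and "\<forall>n\<in>{1..N}. g (m n) = k0cls (elem_mat (p n))"
    and "m N = M"
  shows "\<exists>q :: nat \<Rightarrow> 'a.
            (\<forall>k\<in>{1..M}. is_aproj (q k) \<and> k0cls (elem_mat (q k)) = g k) \<and>
            (\<forall>k. 1 \<le> k \<and> k < M \<longrightarrow> proj_le (q k) (q (Suc k))) \<and>
            (\<forall>n\<in>{1..N}. p n = q (m n))"
proof -
  let ?p = "p(0 := 0)" and ?m = "m(0 := 0)" and ?g = "g(0 := k0cls (elem_mat 0))"
  have "g 1 \<in> K0pos" using assms(2,5,7,10) by force
  then have "\<forall>k<?m N. k0_le (?g k) (?g (Suc k))"
    using assms(2,6,10) k0_le_zero_left by (auto simp: less_Suc_eq_0_disj)
  moreover have "\<forall>n\<le>N. ?g (?m n) = k0cls (elem_mat (?p n))"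
  proof (intro allI impI)
    fix n assume "n \<le> N"
    show "?g (?m n) = k0cls (elem_mat (?p n))"
    proof (cases "n = 0")
      case False
      then have "n \<in> {1..N}" using \<open>n \<le> N\<close> by simp
      then show ?thesis using assms(7,9) by fastforce
    qed simp
  qed
  moreover have "\<forall>n\<le>N. is_aproj (?p n)" using assms(3) is_aproj_zero by simp
  moreover have "\<forall>n<N. proj_le (?p n) (?p (Suc n))" using assms(4) by (simp add: proj_le_def)
  moreover have "\<forall>n<N. ?m n \<le> ?m (Suc n)" using assms(8) by simp
  ultimately obtain q where q:
    "\<forall>k\<le>?m N. is_aproj (q k) \<and> k0cls (elem_mat (q k)) = ?g k"
    "\<forall>k<?m N. proj_le (q k) (q (Suc k))" "\<forall>n\<le>N. ?p n = q (?m n)"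
    using proj_seq_refine_from_zero[OF canc, of ?m N ?p ?g] by auto
  then show ?thesis using assms(2,10) by (intro exI[of _ q]) auto
qed

lemma proj_seq_ending_at:
  fixes A :: "'a::cstar_algebra itself" and p :: 'a
  assumes canc: "has_cancellation A"
    and "is_aproj p" "1 \<le> N" "\<forall>n\<in>{1..N}. g n \<in> K0pos"
    and "\<forall>n. 1 \<le> n \<and> n < N \<longrightarrow> k0_le (g n) (g (Suc n))" "g N = k0cls (elem_mat p)"
  shows "\<exists>ps :: nat \<Rightarrow> 'a.
            (\<forall>n\<in>{1..N}. is_aproj (ps n) \<and> k0cls (elem_mat (ps n)) = g n) \<and>
            (\<forall>n. 1 \<le> n \<and> n < N \<longrightarrow> proj_le (ps n) (ps (Suc n))) \<and>
            ps N = p"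
  using proj_seq_refine[OF canc, of 1 "\<lambda>_. p" N g "\<lambda>_. N"] assms(2-) by auto

theorem lemma2p3:
  fixes A :: "'a::cstar_algebra itself"
  assumes canc: "has_cancellation A"
  shows
   "(\<forall>(p::'a) (g :: nat \<Rightarrow> 'a mat set) (N::nat).
       is_aproj p \<and> 1 \<le> N \<and> (\<forall>n\<in>{1..N}. g n \<in> K0pos) \<and>
       (\<forall>n. 1 \<le> n \<and> n < N \<longrightarrow> k0_le (g n) (g (Suc n))) \<and>
       g N = k0cls (elem_mat p)
     \<longrightarrow> (\<exists>ps :: nat \<Rightarrow> 'a.
            (\<forall>n\<in>{1..N}. is_aproj (ps n) \<and> k0cls (elem_mat (ps n)) = g n) \<and>
            (\<forall>n. 1 \<le> n \<and> n < N \<longrightarrow> proj_le (ps n) (ps (Suc n))) \<and>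
            ps N = p))
  \<and>
   (\<forall>(p :: nat \<Rightarrow> 'a) (N::nat) (g :: nat \<Rightarrow> 'a mat set) (M::nat) (m :: nat \<Rightarrow> nat).
       1 \<le> N \<and>
       (\<forall>n\<in>{1..N}. is_aproj (p n)) \<and>
       (\<forall>n. 1 \<le> n \<and> n < N \<longrightarrow> proj_le (p n) (p (Suc n))) \<and>
       (\<forall>k\<in>{1..M}. g k \<in> K0pos) \<and>
       (\<forall>k. 1 \<le> k \<and> k < M \<longrightarrow> k0_le (g k) (g (Suc k))) \<and>
       (\<forall>n\<in>{1..N}. 1 \<le> m n \<and> m n \<le> M) \<and>
       (\<forall>n. 1 \<le> n \<and> n < N \<longrightarrow> m n \<le> m (Suc n)) \<and>
       (\<forall>n\<in>{1..N}. g (m n) = k0cls (elem_mat (p n))) \<and>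
       m N = M
     \<longrightarrow> (\<exists>q :: nat \<Rightarrow> 'a.
            (\<forall>k\<in>{1..M}. is_aproj (q k) \<and> k0cls (elem_mat (q k)) = g k) \<and>
            (\<forall>k. 1 \<le> k \<and> k < M \<longrightarrow> proj_le (q k) (q (Suc k))) \<and>
            (\<forall>n\<in>{1..N}. p n = q (m n))))"
  by (intro conjI allI impI; elim conjE)
     (rule proj_seq_ending_at[OF canc] proj_seq_refine[OF canc]; assumption)+

end
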